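(* For every (labelled) tree $T$ there exists a $T$-peeling mapping.
   Context: For a tree $T$, let $\mathcal{S}(T)$ be the family of all subtrees of $T$ (connected subgraphs of $T$, which are trees). A mapping $\nu:\mathcal{S}(T)\to 2^{V(T)}$ is $T$-peeling if (i) $\nu(\{v\})=\{v\}$ for every single-vertex subtree $\{v\}$, $v\in V(T)$, and (ii) for every subtree $T'$ with $|V(T')|\ge 2$ we have $\nu(T')=\{u,w\}$ where $u,w$ are two distinct leaves of $T'$ such that $u\in\nu(T'-w)$ and $w\in\nu(T'-u)$. *)

theory Defs
  imports Main
begin

text \<open>A finite simple graph is given by a vertex set V and a symmetric irreflexive
adjacency relation E.  Subgraphs/subtrees are identified with their vertex sets.\<close>

definition adj_in :: "('a \<Rightarrow> 'a \<Rightarrow> bool) \<Rightarrow> 'a set \<Rightarrow> ('a \<times> 'a) set" where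
  "adj_in E S = {(x, y). x \<in> S \<and> y \<in> S \<and> E x y}"

definition connected_on :: "('a \<Rightarrow> 'a \<Rightarrow> bool) \<Rightarrow> 'a set \<Rightarrow> bool" where
  "connected_on E S \<longleftrightarrow> (\<forall>x\<in>S. \<forall>y\<in>S. (x, y) \<in> (adj_in E S)\<^sup>*)"

definition is_cycle :: "('a \<Rightarrow> 'a \<Rightarrow> bool) \<Rightarrow> 'a list \<Rightarrow> bool" where
  "is_cycle E xs \<longleftrightarrow> length xs \<ge> 3 \<and> distinct xs \<and>
     (\<forall>i. Suc i < length xs \<longrightarrow> E (xs ! i) (xs ! Suc i)) \<and> E (last xs) (hd xs)"

definition is_tree :: "'a set \<Rightarrow> ('a \<Rightarrow> 'a \<Rightarrow> bool) \<Rightarrow> bool" where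
  "is_tree V E \<longleftrightarrow> finite V \<and> V \<noteq> {} \<and>
     (\<forall>x y. E x y \<longrightarrow> x \<in> V \<and> y \<in> V) \<and>
     (\<forall>x y. E x y \<longrightarrow> E y x) \<and> (\<forall>x. \<not> E x x) \<and>
     connected_on E V \<and> \<not> (\<exists>xs. set xs \<subseteq> V \<and> is_cycle E xs)"

text \<open>Subtrees of T (connected subgraphs), represented by their vertex sets:
a connected subgraph of a tree is the induced subgraph on its vertex set.\<close>
definition subtrees :: "'a set \<Rightarrow> ('a \<Rightarrow> 'a \<Rightarrow> bool) \<Rightarrow> 'a set set" where
  "subtrees V E = {S. S \<noteq> {} \<and> S \<subseteq> V \<and> connected_on E S}"

definition is_leaf_in :: "('a \<Rightarrow> 'a \<Rightarrow> bool) \<Rightarrow> 'a set \<Rightarrow> 'a \<Rightarrow> bool" where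
  "is_leaf_in E S v \<longleftrightarrow> v \<in> S \<and> card {u \<in> S. E v u} = 1"

definition peeling :: "'a set \<Rightarrow> ('a \<Rightarrow> 'a \<Rightarrow> bool) \<Rightarrow> ('a set \<Rightarrow> 'a set) \<Rightarrow> bool" where
  "peeling V E \<nu> \<longleftrightarrow>
     (\<forall>v\<in>V. \<nu> {v} = {v}) \<and>
     (\<forall>S\<in>subtrees V E. card S \<ge> 2 \<longrightarrow>
        (\<exists>u w. u \<noteq> w \<and> is_leaf_in E S u \<and> is_leaf_in E S w \<and> \<nu> S = {u, w} \<and>
               u \<in> \<nu> (S - {w}) \<and> w \<in> \<nu> (S - {u})))"

end

theory Submission
  imports Defs
begin

text \<open>Fix an injective ranking of the vertices and let \<open>\<nu>(T')\<close> consist of the two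
highest-ranked leaves of \<open>T'\<close>; every subtree with at least two vertices has two leaves, namely
the ends of a longest path.  Deleting a leaf \<open>w\<close> from \<open>T'\<close> creates at most one new leaf, the
neighbour of \<open>w\<close>, and every other leaf of \<open>T' - w\<close> is a leaf of \<open>T'\<close>.  So if \<open>u\<close> and \<open>w\<close>
are the two top leaves of \<open>T'\<close>, at most one leaf of \<open>T' - w\<close> outranks \<open>u\<close>, and \<open>u\<close> remains
among its top two leaves.\<close>

lemma is_treeD:
  assumes "is_tree V E"
  shows "finite V" and "symp E" and "irreflp E" and "\<not> (set xs \<subseteq> V \<and> is_cycle E xs)"
  using assms unfolding is_tree_def symp_def irreflp_def by blast+

lemma connected_on_obtain_neighbour:
  assumes "connected_on E S" "x \<in> S" "y \<in> S" "x \<noteq> y"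
  obtains z where "z \<in> S" "E x z"
proof -
  have "(x, y) \<in> (adj_in E S)\<^sup>*" using assms unfolding connected_on_def by blast
  then show ?thesis using assms(4) that
    by (cases rule: converse_rtranclE) (auto simp: adj_in_def)
qed

lemma is_leaf_in_obtain_neighbour:
  assumes "is_leaf_in E S l"
  obtains p where "{u \<in> S. E l u} = {p}"
  using assms unfolding is_leaf_in_def by (meson card_1_singletonE)

lemma is_leaf_in_Diff_nonadjacent:
  assumes "x \<noteq> w" "\<not> E x w"
  shows "is_leaf_in E (S - {w}) x \<longleftrightarrow> is_leaf_in E S x"
proof -
  have "{u \<in> S - {w}. E x u} = {u \<in> S. E x u}" using assms(2) by auto
  then show ?thesis using assms(1) unfolding is_leaf_in_def by simp
qed

lemma connected_on_Diff_leaf: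
  assumes conn: "connected_on E S" and leaf: "is_leaf_in E S l"
    and sym: "symp E" and irr: "irreflp E"
  shows "connected_on E (S - {l})"
  unfolding connected_on_def
proof (intro ballI)
  fix x y assume x: "x \<in> S - {l}" and y: "y \<in> S - {l}"
  obtain p where p: "{u \<in> S. E l u} = {p}" using leaf by (rule is_leaf_in_obtain_neighbour)
  have "p \<noteq> l" using p irr by (auto simp: irreflp_def)
  have "(x, y) \<in> (adj_in E S)\<^sup>*" using conn x y unfolding connected_on_def by blast
  \<comment> \<open>a walk in \<open>S\<close> can enter the leaf \<open>l\<close> only from \<open>p\<close> and must return to \<open>p\<close>\<close>
  then have "if y = l then (x, p) \<in> (adj_in E (S - {l}))\<^sup>* else (x, y) \<in> (adj_in E (S - {l}))\<^sup>*"
  proof (induction rule: rtrancl_induct)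
    case base
    then show ?case using x by auto
  next
    case (step y z)
    then have yz: "y \<in> S" "z \<in> S" "E y z" by (auto simp: adj_in_def)
    show ?case
    proof (cases "y = l")
      case True
      then have "z = p" using p yz by auto
      then show ?thesis using step.IH True \<open>p \<noteq> l\<close> by auto
    next
      case False
      with step.IH have IH: "(x, y) \<in> (adj_in E (S - {l}))\<^sup>*" by simp
      show ?thesis
      proof (cases "z = l")
        case True
        then have "y = p" using p yz sym by (auto simp: symp_def)
        then show ?thesis using IH True by simp
      next
        case False
        then have "(y, z) \<in> adj_in E (S - {l})" using yz \<open>y \<noteq> l\<close> by (auto simp: adj_in_def)
        then show ?thesis using IH False by (simp add: rtrancl.rtrancl_into_rtrancl)
      qed
    qed
  qed
  then show "(x, y) \<in> (adj_in E (S - {l}))\<^sup>*" using y by simp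
qed

lemma is_leaf_in_Diff_leaf:
  assumes conn: "connected_on E S" and fin: "finite S" and card: "3 \<le> card S"
    and sym: "symp E" and irr: "irreflp E"
    and l: "is_leaf_in E S l" and w: "is_leaf_in E S w" and "l \<noteq> w"
  shows "is_leaf_in E (S - {w}) l"
proof -
  have "l \<in> S - {w}" "w \<in> S" using l w \<open>l \<noteq> w\<close> by (auto simp: is_leaf_in_def)
  have "card (S - {w}) \<noteq> card {l}" using card fin \<open>w \<in> S\<close> by simp
  then have "S - {w} \<noteq> {l}" by metis
  then obtain y where "y \<in> S - {w}" "y \<noteq> l" using \<open>l \<in> S - {w}\<close> by blast
  then obtain z where z: "z \<in> S - {w}" "E l z"
    using connected_on_obtain_neighbour[OF connected_on_Diff_leaf[OF conn w sym irr] \<open>l \<in> S - {w}\<close>]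
    by metis
  obtain q where q: "{u \<in> S. E l u} = {q}" using l by (rule is_leaf_in_obtain_neighbour)
  have "\<not> E l w"
  proof
    assume "E l w"
    then have "w \<in> {u \<in> S. E l u}" "z \<in> {u \<in> S. E l u}" using \<open>w \<in> S\<close> z by auto
    then show False using q z(1) by auto
  qed
  then show ?thesis using l \<open>l \<noteq> w\<close> is_leaf_in_Diff_nonadjacent by metis
qed

definition is_path :: "('a \<Rightarrow> 'a \<Rightarrow> bool) \<Rightarrow> 'a set \<Rightarrow> 'a list \<Rightarrow> bool" where
  "is_path E S xs \<longleftrightarrow> distinct xs \<and> set xs \<subseteq> S \<and> successively E xs"

lemma is_path_rev:
  assumes "symp E" "is_path E S xs"
  shows "is_path E S (rev xs)"
proof -
  have "successively E xs" using assms(2) by (simp add: is_path_def)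
  then have "successively (\<lambda>x y. E y x) xs"
    by (rule successively_mono) (use assms(1) in \<open>simp add: symp_def\<close>)
  then show ?thesis using assms(2) by (simp add: is_path_def)
qed

lemma length_le_card_if_is_path:
  assumes "finite S" "is_path E S xs"
  shows "length xs \<le> card S"
proof -
  have "length xs = card (set xs)" using assms(2) by (simp add: is_path_def distinct_card)
  also have "\<dots> \<le> card S" using assms by (simp add: is_path_def card_mono)
  finally show ?thesis .
qed

lemma is_cycle_take_if_chord:
  assumes path: "is_path E S xs" and j: "2 \<le> j" "j < length xs" and chord: "E (xs ! j) (hd xs)"
  shows "is_cycle E (take (Suc j) xs)"
  unfolding is_cycle_def
proof (intro conjI allI impI)
  show "3 \<le> length (take (Suc j) xs)" "distinct (take (Suc j) xs)"
    using path j unfolding is_path_def by auto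
  fix i assume "Suc i < length (take (Suc j) xs)"
  then show "E (take (Suc j) xs ! i) (take (Suc j) xs ! Suc i)"
    using path unfolding is_path_def by (auto intro: successively_nth)
next
  have "last (take (Suc j) xs) = xs ! j" using j by (simp add: take_Suc_conv_app_nth)
  then show "E (last (take (Suc j) xs)) (hd (take (Suc j) xs))" using chord by simp
qed

lemma is_leaf_in_hd_if_longest_path:
  assumes tree: "is_tree V E" and "S \<subseteq> V"
    and path: "is_path E S xs" and len: "2 \<le> length xs"
    and longest: "\<And>ys. is_path E S ys \<Longrightarrow> length ys \<le> length xs"
  shows "is_leaf_in E S (hd xs)"
proof -
  have sym: "symp E" and irr: "irreflp E" using tree by (rule is_treeD)+
  obtain a b ys where xs: "xs = a # b # ys" using len by (cases xs rule: remdups_adj.cases) auto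
  have "{u \<in> S. E a u} \<subseteq> {b}"
  proof
    fix c assume c: "c \<in> {u \<in> S. E a u}"
    show "c \<in> {b}"
    proof (cases "c \<in> set xs")
      case False
      then have "is_path E S (c # xs)"
        using path c sym unfolding is_path_def xs by (auto simp: symp_def)
      then show ?thesis using longest by fastforce
    next
      case True
      then obtain j where j: "j < length xs" "c = xs ! j" by (auto simp: in_set_conv_nth)
      have "j \<noteq> 0" using c j irr by (auto simp: xs irreflp_def nth_Cons' split: if_splits)
      moreover have "\<not> 2 \<le> j"
      proof
        assume "2 \<le> j"
        moreover have "E (xs ! j) (hd xs)" using c j(2) sym by (simp add: xs symp_def)
        ultimately have "is_cycle E (take (Suc j) xs)"
          using is_cycle_take_if_chord[OF path _ j(1)] by blast
        moreover have "set (take (Suc j) xs) \<subseteq> V"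
          using path \<open>S \<subseteq> V\<close> set_take_subset unfolding is_path_def by fastforce
        ultimately show False using is_treeD(4)[OF tree] by blast
      qed
      ultimately have "j = 1" by simp
      then show ?thesis using j by (simp add: xs)
    qed
  qed
  moreover have "a \<in> S" "b \<in> S" "E a b" using path unfolding is_path_def xs by auto
  ultimately have "{u \<in> S. E a u} = {b}" by blast
  then show ?thesis using \<open>a \<in> S\<close> by (simp add: is_leaf_in_def xs)
qed

lemma subtree_obtain_two_leaves:
  assumes tree: "is_tree V E" and S: "S \<in> subtrees V E" and card: "2 \<le> card S"
  obtains u w where "u \<noteq> w" "is_leaf_in E S u" "is_leaf_in E S w"
proof -
  have SV: "S \<subseteq> V" and conn: "connected_on E S" using S by (auto simp: subtrees_def)
  have fin: "finite S" using SV is_treeD(1)[OF tree] by (rule finite_subset)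
  have irr: "irreflp E" using tree by (rule is_treeD)
  obtain x where "x \<in> S" using card by fastforce
  moreover have "S \<noteq> {x}" using card by auto
  ultimately obtain y where "y \<in> S" "y \<noteq> x" by blast
  with \<open>x \<in> S\<close> obtain z where "z \<in> S" "E x z" by (metis conn connected_on_obtain_neighbour)
  then have edge: "is_path E S [x, z]" using \<open>x \<in> S\<close> irr by (auto simp: is_path_def irreflp_def)
  have "\<exists>xs. is_path E S xs \<and> (\<forall>ys. is_path E S ys \<longrightarrow> length ys \<le> length xs)"
    using length_le_card_if_is_path[OF fin] edge
    by (intro ex_has_greatest_nat[where b = "Suc (card S)"]) (auto simp: less_Suc_eq_le)
  then obtain xs where xs: "is_path E S xs" and longest: "\<And>ys. is_path E S ys \<Longrightarrow> length ys \<le> length xs"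
    by blast
  have len: "2 \<le> length xs" using longest[OF edge] by simp
  have "is_leaf_in E S (hd xs)"
    using is_leaf_in_hd_if_longest_path[OF tree SV xs len longest] .
  moreover have "is_leaf_in E S (last xs)"
    using is_leaf_in_hd_if_longest_path[OF tree SV is_path_rev[OF is_treeD(2)[OF tree] xs]] len longest
    by (simp add: hd_rev)
  moreover have "hd xs \<noteq> last xs"
    using xs len unfolding is_path_def by (cases xs) auto
  ultimately show ?thesis using that by blast
qed

definition top_two :: "('a \<Rightarrow> 'b::linorder) \<Rightarrow> 'a set \<Rightarrow> 'a set" where
  "top_two f A = {a \<in> A. card {b \<in> A. f a < f b} < 2}"

lemma top_two_upward_closed:
  assumes "finite A" "a \<in> top_two f A" "b \<in> A" "f a < f b"
  shows "b \<in> top_two f A"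
proof -
  have "{c \<in> A. f b < f c} \<subset> {c \<in> A. f a < f c}" using assms(3,4) by auto
  then have "card {c \<in> A. f b < f c} < card {c \<in> A. f a < f c}"
    using assms(1) by (simp add: psubset_card_mono)
  then show ?thesis using assms(2,3) by (simp add: top_two_def)
qed

lemma mem_top_two_if_outranked_by_one:
  assumes "a \<in> A" "{b \<in> A. f a < f b} \<subseteq> {p}"
  shows "a \<in> top_two f A"
proof -
  have "card {b \<in> A. f a < f b} \<le> card {p}" using assms(2) by (rule card_mono[rotated]) simp
  then show ?thesis using assms(1) by (simp add: top_two_def)
qed

lemma top_two_dominates:
  assumes "finite A" "top_two f A = {u, w}" "x \<in> A" "x \<noteq> w"
  shows "f x \<le> f u"
proof (rule ccontr)
  assume "\<not> f x \<le> f u"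
  then have "x \<in> top_two f A" using assms top_two_upward_closed[of A u f x] by auto
  then show False using assms(2,4) \<open>\<not> f x \<le> f u\<close> by auto
qed

lemma finite_obtain_arg_max:
  fixes f :: "'a \<Rightarrow> 'b::linorder"
  assumes "finite A" "A \<noteq> {}"
  obtains a where "a \<in> A" "\<And>b. b \<in> A \<Longrightarrow> f b \<le> f a"
proof -
  have "Max (f ` A) \<in> f ` A" using assms by simp
  then obtain a where "a \<in> A" "f a = Max (f ` A)" by (metis imageE)
  moreover have "f b \<le> Max (f ` A)" if "b \<in> A" for b using assms(1) that by simp
  ultimately show ?thesis using that by simp
qed

lemma top_two_obtain_pair:
  assumes fin: "finite A" and inj: "inj_on f A" and card: "2 \<le> card A"
  obtains a b where "a \<noteq> b" "top_two f A = {a, b}"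
proof -
  have less_if_le: "f x < f y" if "x \<in> A" "y \<in> A" "x \<noteq> y" "f x \<le> f y" for x y
    using that inj by (auto simp: order_less_le inj_on_eq_iff)
  have "A \<noteq> {}" using card by auto
  obtain a where a: "a \<in> A" "\<And>c. c \<in> A \<Longrightarrow> f c \<le> f a"
    using finite_obtain_arg_max[OF fin \<open>A \<noteq> {}\<close>, of f] by blast
  have "A \<noteq> {a}" using card by auto
  then have "A - {a} \<noteq> {}" using a(1) by blast
  obtain b where b: "b \<in> A - {a}" "\<And>c. c \<in> A - {a} \<Longrightarrow> f c \<le> f b"
    using finite_obtain_arg_max[OF finite_Diff[OF fin] \<open>A - {a} \<noteq> {}\<close>, of f] by blast
  have "{c \<in> A. f a < f c} = {}" using a(2) leD by blast
  then have "card {c \<in> A. f a < f c} = 0" by (simp only: card.empty)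
  moreover have "card {c \<in> A. f b < f c} \<le> card {a}"
    using b fin by (intro card_mono) (auto dest: leD)
  moreover have "\<not> card {c' \<in> A. f c < f c'} < 2" if "c \<in> A - {a, b}" for c
  proof -
    have "f c < f b" "f b < f a" using that a b less_if_le by auto
    then have "{a, b} \<subseteq> {c' \<in> A. f c < f c'}" using a b by auto
    then have "card {a, b} \<le> card {c' \<in> A. f c < f c'}" using fin by (intro card_mono) auto
    moreover have "card {a, b} = 2" using b(1) by auto
    ultimately show ?thesis by linarith
  qed
  ultimately have "top_two f A = {a, b}" using a b by (auto simp: top_two_def)
  then show ?thesis using b that by blast
qed

definition leaves :: "('a \<Rightarrow> 'a \<Rightarrow> bool) \<Rightarrow> 'a set \<Rightarrow> 'a set" where
  "leaves E S = {v. is_leaf_in E S v}"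

lemma leaves_subset: "leaves E S \<subseteq> S"
  by (auto simp: leaves_def is_leaf_in_def)

lemma leaves_Diff_leaf_subset:
  assumes sym: "symp E" and p: "{u \<in> S. E w u} = {p}"
  shows "leaves E (S - {w}) \<subseteq> insert p (leaves E S - {w})"
proof
  fix x assume x: "x \<in> leaves E (S - {w})"
  then have "x \<in> S" "x \<noteq> w" by (auto simp: leaves_def is_leaf_in_def)
  show "x \<in> insert p (leaves E S - {w})"
  proof (cases "x = p")
    case False
    then have "\<not> E x w" using sym p \<open>x \<in> S\<close> by (auto simp: symp_def)
    then have "is_leaf_in E S x"
      using x is_leaf_in_Diff_nonadjacent[OF \<open>x \<noteq> w\<close>] by (simp add: leaves_def)
    then show ?thesis using \<open>x \<noteq> w\<close> by (simp add: leaves_def)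
  qed simp
qed

definition peel_by_rank :: "('a \<Rightarrow> 'b::linorder) \<Rightarrow> ('a \<Rightarrow> 'a \<Rightarrow> bool) \<Rightarrow> 'a set \<Rightarrow> 'a set" where
  "peel_by_rank f E S = (if 2 \<le> card S then top_two f (leaves E S) else S)"

lemma mem_peel_by_rank_Diff_leaf:
  assumes tree: "is_tree V E" and S: "S \<in> subtrees V E"
    and w: "is_leaf_in E S w" and l: "is_leaf_in E S l" and "l \<noteq> w"
    and dominates: "\<And>x. x \<in> leaves E S - {w} \<Longrightarrow> f x \<le> f l"
  shows "l \<in> peel_by_rank f E (S - {w})"
proof -
  have sym: "symp E" and irr: "irreflp E" using tree by (rule is_treeD)+
  have conn: "connected_on E S" using S by (simp add: subtrees_def)
  have fin: "finite S" using S is_treeD(1)[OF tree] by (auto simp: subtrees_def intro: finite_subset)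
  have "w \<in> S" "l \<in> S - {w}" using w l \<open>l \<noteq> w\<close> by (auto simp: is_leaf_in_def)
  show ?thesis
  proof (cases "2 \<le> card (S - {w})")
    case False
    then have "card (S - {w}) \<le> Suc 0" by simp
    then have "S - {w} = {l}" using fin \<open>l \<in> S - {w}\<close> by (auto simp: card_le_Suc0_iff_eq)
    then show ?thesis by (simp add: peel_by_rank_def)
  next
    case True
    obtain p where p: "{u \<in> S. E w u} = {p}" using w by (rule is_leaf_in_obtain_neighbour)
    have "3 \<le> card S" using True fin \<open>w \<in> S\<close> by simp
    then have "l \<in> leaves E (S - {w})"
      using is_leaf_in_Diff_leaf[OF conn fin _ sym irr l w \<open>l \<noteq> w\<close>] by (simp add: leaves_def)
    moreover have "x = p" if "x \<in> leaves E (S - {w})" "f l < f x" for x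
    proof (rule ccontr)
      assume "x \<noteq> p"
      then have "x \<in> leaves E S - {w}" using that(1) leaves_Diff_leaf_subset[OF sym p] by blast
      then show False using dominates that(2) leD by blast
    qed
    then have "{x \<in> leaves E (S - {w}). f l < f x} \<subseteq> {p}" by blast
    ultimately show ?thesis using True by (simp add: peel_by_rank_def mem_top_two_if_outranked_by_one)
  qed
qed

lemma peeling_peel_by_rank:
  assumes tree: "is_tree V E" and inj: "inj_on f V"
  shows "peeling V E (peel_by_rank f E)"
  unfolding peeling_def
proof (intro conjI ballI impI)
  fix v show "peel_by_rank f E {v} = {v}" by (simp add: peel_by_rank_def)
next
  fix S assume S: "S \<in> subtrees V E" and card: "2 \<le> card S"
  define L where "L = leaves E S"
  have "S \<subseteq> V" using S by (simp add: subtrees_def)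
  then have fin: "finite L" and inj_L: "inj_on f L"
    using is_treeD(1)[OF tree] inj leaves_subset[of E S]
    by (auto simp: L_def intro: finite_subset inj_on_subset)
  obtain a b where "a \<noteq> b" "a \<in> L" "b \<in> L"
    using subtree_obtain_two_leaves[OF tree S card] by (auto simp: L_def leaves_def)
  then have "2 \<le> card L" using fin card_mono[of L "{a, b}"] by simp
  then obtain u w where "u \<noteq> w" and top: "top_two f L = {u, w}"
    using top_two_obtain_pair[OF fin inj_L] by blast
  have "top_two f L \<subseteq> L" by (auto simp: top_two_def)
  then have leaves: "is_leaf_in E S u" "is_leaf_in E S w"
    using top by (auto simp: L_def leaves_def)
  have "u \<in> peel_by_rank f E (S - {w})"
    using top_two_dominates[OF fin top]
    by (intro mem_peel_by_rank_Diff_leaf[OF tree S leaves(2,1) \<open>u \<noteq> w\<close>]) (simp add: L_def)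
  moreover have "w \<in> peel_by_rank f E (S - {u})"
    using top_two_dominates[OF fin top[unfolded insert_commute[of u]]] \<open>u \<noteq> w\<close>
    by (intro mem_peel_by_rank_Diff_leaf[OF tree S leaves]) (simp_all add: L_def)
  moreover have "peel_by_rank f E S = {u, w}" using card top by (simp add: peel_by_rank_def L_def)
  ultimately show "\<exists>u w. u \<noteq> w \<and> is_leaf_in E S u \<and> is_leaf_in E S w \<and>
      peel_by_rank f E S = {u, w} \<and> u \<in> peel_by_rank f E (S - {w}) \<and> w \<in> peel_by_rank f E (S - {u})"
    using \<open>u \<noteq> w\<close> leaves by blast
qed

theorem lemma4p3:
  fixes V :: "'a set" and E :: "'a \<Rightarrow> 'a \<Rightarrow> bool"
  assumes "is_tree V E"
  shows "\<exists>\<nu>. peeling V E \<nu>"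
proof -
  obtain f :: "'a \<Rightarrow> nat" where "inj_on f V"
    using finite_imp_inj_to_nat_seg[OF is_treeD(1)[OF assms]] by blast
  then show ?thesis using peeling_peel_by_rank[OF assms] by blast
qed

end
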